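(* For all $n\in\mathbb N$ the following hold in the $q$-shuffle algebra $\mathbb V$: $$\sum_{k=0}^n G_{n-k}\star W_{-k}\,q^{2k-n}=\sum_{k=0}^n W_{-k}\star G_{n-k}\,q^{n-2k},$$ $$\sum_{k=0}^n G_{n-k}\star W_{k+1}\,q^{n-2k}=\sum_{k=0}^n W_{k+1}\star G_{n-k}\,q^{2k-n},$$ $$\sum_{k=0}^n \tilde G_{n-k}\star W_{-k}\,q^{n-2k}=\sum_{k=0}^n W_{-k}\star \tilde G_{n-k}\,q^{2k-n},$$ $$\sum_{k=0}^n \tilde G_{n-k}\star W_{k+1}\,q^{2k-n}=\sum_{k=0}^n W_{k+1}\star \tilde G_{n-k}\,q^{n-2k}.$$
   Context: Let $\mathbb F$ be a field and let $q\in\mathbb F$ be nonzero and not a root of unity. Let $\mathbb V$ be the free associative $\mathbb F$-algebra on noncommuting $x,y$, with basis the words (including $1$). Juxtaposition denotes concatenation. Set $\langle x,x\rangle=\langle y,y\rangle=2$ and $\langle x,y\rangle=\langle y,x\rangle=-2$. The $q$-shuffle product $\star$ is the bilinear product determined as follows: - $1\star v=v\star 1=v$; - for nontrivial words $u=u_1\cdots u_r$ and $v=v_1\cdots v_s$, $$u\star v=u_1((u_2\cdots u_r)\star v)+v_1(u\star(v_2\cdots v_s))q^{\langle u_1,v_1\rangle+\cdots+\langle u_r,v_1\rangle}.$$ This makes $\mathbb V$ an associative algebra, the $q$-shuffle algebra. For $k\in\mathbb N$: - $W_{-k}=xyx\cdots x$ is the alternating word of length $2k+1$ beginning and ending with $x$;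 - $W_{k+1}=yxy\cdots y$ is the alternating word of length $2k+1$ beginning and ending with $y$; - $G_k=yxyx\cdots yx$ is the word of length $2k$; - $\tilde G_k=xyxy\cdots xy$ is the word of length $2k$; - $G_0=\tilde G_0=1$. *)

theory Defs
  imports Main
begin

text \<open>Letters of the free algebra V on x, y; words are letter lists.
  An element of V is represented by its coefficient function word => 'a
  (all elements occurring below are finitely supported).\<close>

datatype letter = X | Y

type_synonym word = "letter list"

definition bracket :: "letter \<Rightarrow> letter \<Rightarrow> int" where
  "bracket a b = (if a = b then 2 else -2)"

definition wvec :: "word \<Rightarrow> word \<Rightarrow> 'a::zero_neq_one" where
  "wvec u = (\<lambda>w. if w = u then 1 else 0)"

text \<open>Left concatenation by a letter, extended linearly.\<close>
definition lpre :: "letter \<Rightarrow> (word \<Rightarrow> 'a::zero) \<Rightarrow> word \<Rightarrow> 'a" where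
  "lpre a f = (\<lambda>w. case w of [] \<Rightarrow> 0 | b # w' \<Rightarrow> (if b = a then f w' else 0))"

function qsh :: "'a::field \<Rightarrow> word \<Rightarrow> word \<Rightarrow> word \<Rightarrow> 'a" where
  "qsh q [] v = wvec v"
| "qsh q (a # u) [] = wvec (a # u)"
| "qsh q (a # u) (b # v) =
     (\<lambda>w. lpre a (qsh q u (b # v)) w
        + lpre b (qsh q (a # u) v) w * q powi (\<Sum>c\<leftarrow>a # u. bracket c b))"
  by pat_completeness auto
termination by (relation "measure (\<lambda>(q, u, v). length u + length v)") auto

definition Wneg :: "nat \<Rightarrow> word" where
  "Wneg k = map (\<lambda>i. if even i then X else Y) [0..<2*k+1]"
definition Wpos :: "nat \<Rightarrow> word" where   \<comment> \<open>W_{k+1} = yxy...y, length 2k+1\<close>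
  "Wpos k = map (\<lambda>i. if even i then Y else X) [0..<2*k+1]"
definition G :: "nat \<Rightarrow> word" where
  "G k = map (\<lambda>i. if even i then Y else X) [0..<2*k]"
definition Gt :: "nat \<Rightarrow> word" where
  "Gt k = map (\<lambda>i. if even i then X else Y) [0..<2*k]"

end

theory Submission
  imports Defs
begin

text \<open>Compare the coefficients of a word w by its first letter. Since the letters of
  G_m pair up as yx, a letter passing over G_m picks up no power of q. Hence if w starts
  with x, this x must be the first letter of W_{-k}, and both sides of the first identity
  reduce to sums of G_{n-k} \<star> G_k whose weights are exchanged by k \<mapsto> n - k.
  If w starts with y, it must be the first letter of G_{n-k}; on the right it passes over
  W_{-k}, contributing q^{-2}, and both sides become sums of W_{-(n-1-k)} \<star> W_{-k}
  matched by k \<mapsto> n - 1 - k. The other three identities are images of the first under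
  the automorphism exchanging x and y and the antiautomorphism reversing words, both of
  which the q-shuffle product respects.\<close>

lemma qsh_Nil_left_eq: "qsh q [] v w = (if w = v then 1 else 0)"
  by (simp add: wvec_def)

lemma qsh_Nil_right_eq: "qsh q u [] w = (if w = u then 1 else 0)"
  by (cases u) (simp_all add: wvec_def)

lemma qsh_apply_Nil: "qsh q u v [] = (if u = [] \<and> v = [] then 1 else 0)"
  by (cases u; cases v) (auto simp: wvec_def lpre_def)

lemma qsh_apply_Cons:
  "qsh q u v (c # w) =
     (case u of [] \<Rightarrow> 0 | a # u' \<Rightarrow> if a = c then qsh q u' v w else 0)
   + (case v of [] \<Rightarrow> 0
      | b # v' \<Rightarrow> if b = c then qsh q u v' w * q powi (\<Sum>d\<leftarrow>u. bracket d b) else 0)"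
  by (cases u; cases v) (auto simp: lpre_def wvec_def qsh_Nil_right_eq)

declare qsh.simps [simp del]

lemma bracket_commute: "bracket a b = bracket b a"
  by (simp add: bracket_def eq_commute)

lemma case_list_snoc:
  "(case xs @ [x] of [] \<Rightarrow> f | y # ys \<Rightarrow> g y ys)
     = (case xs of [] \<Rightarrow> g x [] | y # ys \<Rightarrow> g y (ys @ [x]))"
  by (cases xs) auto

lemma qsh_snoc:
  assumes "q \<noteq> 0"
  shows "qsh q (u @ [a]) (v @ [b]) (w @ [c]) =
     (if a = c then qsh q u (v @ [b]) w * q powi (\<Sum>d\<leftarrow>v @ [b]. bracket d a) else 0)
   + (if b = c then qsh q (u @ [a]) v w else 0)"
proof (induction w arbitrary: u v)
  case Nil
  show ?case
    by (cases u; cases v) (auto simp: qsh_apply_Cons qsh_apply_Nil bracket_commute)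
next
  case (Cons d w)
  show ?case
    using assms
    by (simp only: append_Cons qsh_apply_Cons case_list_snoc Cons.IH)
      (cases u; cases v; simp add: qsh_Nil_left_eq qsh_Nil_right_eq distrib_left distrib_right
        power_int_add bracket_commute ac_simps)
qed

lemma qsh_rev:
  assumes "q \<noteq> 0"
  shows "qsh q (rev v) (rev u) (rev w) = qsh q u v w"
proof (induction w arbitrary: u v)
  case Nil
  show ?case by (simp add: qsh_apply_Nil)
next
  case (Cons c w)
  show ?case
    by (cases u; cases v)
      (simp_all add: qsh_apply_Cons qsh_snoc[OF assms] Cons.IH[symmetric] qsh_Nil_left_eq
        qsh_Nil_right_eq rev_map[symmetric] add.commute)
qed

fun flip :: "letter \<Rightarrow> letter" where
  "flip X = Y"
| "flip Y = X"

lemma flip_flip [simp]: "flip (flip a) = a"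
  by (cases a) simp_all

lemma flip_eq_iff [simp]: "flip a = flip b \<longleftrightarrow> a = b"
  by (cases a; cases b) simp_all

lemma bracket_flip [simp]: "bracket (flip a) (flip b) = bracket a b"
  by (simp add: bracket_def)

lemma case_list_map:
  "(case map f xs of [] \<Rightarrow> a | y # ys \<Rightarrow> g y ys)
     = (case xs of [] \<Rightarrow> a | y # ys \<Rightarrow> g (f y) (map f ys))"
  by (cases xs) auto

lemma qsh_map_flip: "qsh q (map flip u) (map flip v) (map flip w) = qsh q u v w"
proof (induction w arbitrary: u v)
  case Nil
  show ?case by (simp add: qsh_apply_Nil)
next
  case (Cons c w)
  show ?case
    by (simp only: list.map(2) qsh_apply_Cons case_list_map Cons.IH)
      (cases u; cases v; simp add: comp_def)
qed

lemma G_0 [simp]: "G 0 = []"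
  by (simp add: G_def)

lemma Wneg_eq_Cons: "Wneg k = X # G k"
  by (rule nth_equalityI) (auto simp: nth_Cons' G_def Wneg_def simp del: upt_Suc)

lemma G_Suc: "G (Suc m) = Y # Wneg m"
  by (rule nth_equalityI) (auto simp: nth_Cons' G_def Wneg_def simp del: upt_Suc)

lemma map_flip_G: "map flip (G m) = Gt m"
  by (simp add: G_def Gt_def)

lemma map_flip_Gt: "map flip (Gt m) = G m"
  by (simp add: G_def Gt_def)

lemma map_flip_Wneg: "map flip (Wneg k) = Wpos k"
  by (simp add: Wneg_def Wpos_def)

lemma rev_G: "rev (G m) = Gt m"
  by (rule nth_equalityI) (auto simp: G_def Gt_def rev_nth)

lemma rev_Wneg: "rev (Wneg k) = Wneg k"
  by (rule nth_equalityI) (auto simp: Wneg_def rev_nth simp del: upt_Suc)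

lemma sum_bracket_G: "(\<Sum>d\<leftarrow>G m. bracket d c) = 0"
  by (induction m) (cases c; simp add: G_Suc Wneg_eq_Cons bracket_def)+

lemma sum_bracket_Wneg_Y: "(\<Sum>d\<leftarrow>Wneg k. bracket d Y) = -2"
  by (simp add: Wneg_eq_Cons sum_bracket_G) (simp add: bracket_def)

lemma qsh_G_Wneg_Cons_X: "qsh q (G m) (Wneg k) (X # w) = qsh q (G m) (G k) w"
  using sum_bracket_G[where m = m and c = X]
  by (cases m) (simp_all add: G_Suc Wneg_eq_Cons qsh_apply_Cons qsh_Nil_left_eq)

lemma qsh_Wneg_G_Cons_X: "qsh q (Wneg k) (G m) (X # w) = qsh q (G k) (G m) w"
  by (cases m) (simp_all add: G_Suc Wneg_eq_Cons qsh_apply_Cons)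

lemma qsh_G_Wneg_Cons_Y: "qsh q (G (Suc m)) (Wneg k) (Y # w) = qsh q (Wneg m) (Wneg k) w"
  by (simp add: G_Suc Wneg_eq_Cons qsh_apply_Cons)

lemma qsh_Wneg_G_Cons_Y:
  "qsh q (Wneg k) (G (Suc m)) (Y # w) = qsh q (Wneg k) (Wneg m) w * q powi -2"
  using sum_bracket_Wneg_Y[of k] by (simp add: G_Suc Wneg_eq_Cons[of k] qsh_apply_Cons)

lemma sum_atMost_reflect: "(\<Sum>k\<le>n. f k) = (\<Sum>k\<le>n. f (n - k :: nat))"
  using sum.atLeastAtMost_rev[of f 0 n] by (simp add: atMost_atLeast0)

lemma sum_qsh_G_Wneg_Cons_X:
  "(\<Sum>k\<le>n. qsh q (G (n-k)) (Wneg k) (X # w) * q powi (2*int k - int n))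
     = (\<Sum>k\<le>n. qsh q (Wneg k) (G (n-k)) (X # w) * q powi (int n - 2*int k))"
proof -
  have "(\<Sum>k\<le>n. qsh q (Wneg k) (G (n-k)) (X # w) * q powi (int n - 2*int k))
      = (\<Sum>k\<le>n. qsh q (G (n-k)) (G k) w * q powi (int n - 2*int (n-k)))"
    by (subst sum_atMost_reflect) (simp add: qsh_Wneg_G_Cons_X)
  also have "\<dots> = (\<Sum>k\<le>n. qsh q (G (n-k)) (Wneg k) (X # w) * q powi (2*int k - int n))"
    by (rule sum.cong) (simp_all add: qsh_G_Wneg_Cons_X of_nat_diff)
  finally show ?thesis ..
qed

lemma sum_qsh_G_Wneg_Cons_Y:
  assumes "q \<noteq> 0"
  shows "(\<Sum>k\<le>n. qsh q (G (n-k)) (Wneg k) (Y # w) * q powi (2*int k - int n))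
     = (\<Sum>k\<le>n. qsh q (Wneg k) (G (n-k)) (Y # w) * q powi (int n - 2*int k))"
proof (cases n)
  case 0
  then show ?thesis by (simp add: Wneg_eq_Cons qsh_Nil_left_eq qsh_Nil_right_eq)
next
  case (Suc m)
  have "(\<Sum>k\<le>n. qsh q (Wneg k) (G (n-k)) (Y # w) * q powi (int n - 2*int k))
      = (\<Sum>k\<le>m. qsh q (Wneg k) (Wneg (m-k)) w * (q powi -2 * q powi (int n - 2*int k)))"
    using Suc by (simp add: Suc_diff_le qsh_Wneg_G_Cons_Y Wneg_eq_Cons[of "Suc m"]
      qsh_Nil_right_eq ac_simps)
  also have "\<dots> = (\<Sum>k\<le>m. qsh q (Wneg (m-k)) (Wneg k) w * q powi (2*int k - int n))"
    using Suc assms by (subst sum_atMost_reflect)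
      (auto intro!: sum.cong simp: of_nat_diff power_int_add[symmetric] algebra_simps)
  also have "\<dots> = (\<Sum>k\<le>n. qsh q (G (n-k)) (Wneg k) (Y # w) * q powi (2*int k - int n))"
    using Suc by (simp add: Suc_diff_le qsh_G_Wneg_Cons_Y Wneg_eq_Cons[of "Suc m"]
      qsh_Nil_left_eq)
  finally show ?thesis ..
qed

lemma sum_qsh_G_Wneg:
  assumes "q \<noteq> 0"
  shows "(\<Sum>k\<le>n. qsh q (G (n-k)) (Wneg k) w * q powi (2*int k - int n))
     = (\<Sum>k\<le>n. qsh q (Wneg k) (G (n-k)) w * q powi (int n - 2*int k))"
proof (cases w)
  case Nil
  then show ?thesis by (simp add: qsh_apply_Nil Wneg_eq_Cons)
next
  case (Cons c w')
  then show ?thesis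
    using sum_qsh_G_Wneg_Cons_X sum_qsh_G_Wneg_Cons_Y[OF assms] by (cases c) simp_all
qed

lemma sum_qsh_Gt_Wneg:
  assumes "q \<noteq> 0"
  shows "(\<Sum>k\<le>n. qsh q (Gt (n-k)) (Wneg k) w * q powi (int n - 2*int k))
     = (\<Sum>k\<le>n. qsh q (Wneg k) (Gt (n-k)) w * q powi (2*int k - int n))"
  using sum_qsh_G_Wneg[OF assms, of n "rev w"]
  by (simp add: qsh_rev[OF assms, of "Wneg _" "G _", symmetric]
      qsh_rev[OF assms, of "G _" "Wneg _", symmetric] rev_G rev_Wneg)

lemma qsh_map_flip_left: "qsh q (map flip u) (map flip v) w = qsh q u v (map flip w)"
  using qsh_map_flip[of q u v "map flip w"] by (simp add: comp_def)

lemma sum_qsh_G_Wpos: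
  assumes "q \<noteq> 0"
  shows "(\<Sum>k\<le>n. qsh q (G (n-k)) (Wpos k) w * q powi (int n - 2*int k))
     = (\<Sum>k\<le>n. qsh q (Wpos k) (G (n-k)) w * q powi (2*int k - int n))"
  using sum_qsh_Gt_Wneg[OF assms, of n "map flip w"]
  by (simp only: map_flip_Gt[symmetric] map_flip_Wneg[symmetric] qsh_map_flip_left)

lemma sum_qsh_Gt_Wpos:
  assumes "q \<noteq> 0"
  shows "(\<Sum>k\<le>n. qsh q (Gt (n-k)) (Wpos k) w * q powi (2*int k - int n))
     = (\<Sum>k\<le>n. qsh q (Wpos k) (Gt (n-k)) w * q powi (int n - 2*int k))"
  using sum_qsh_G_Wneg[OF assms, of n "map flip w"]
  by (simp only: map_flip_G[symmetric] map_flip_Wneg[symmetric] qsh_map_flip_left)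

theorem proposition6p3:
  fixes q :: "'a::field" and n :: nat
  assumes "q \<noteq> 0" and "\<forall>m::nat. m > 0 \<longrightarrow> q ^ m \<noteq> 1"
  shows "((\<lambda>w. \<Sum>k\<le>n. qsh q (G (n-k)) (Wneg k) w * q powi (2*int k - int n))
           = (\<lambda>w. \<Sum>k\<le>n. qsh q (Wneg k) (G (n-k)) w * q powi (int n - 2*int k))) \<and>
      ((\<lambda>w. \<Sum>k\<le>n. qsh q (G (n-k)) (Wpos k) w * q powi (int n - 2*int k))
           = (\<lambda>w. \<Sum>k\<le>n. qsh q (Wpos k) (G (n-k)) w * q powi (2*int k - int n))) \<and>
      ((\<lambda>w. \<Sum>k\<le>n. qsh q (Gt (n-k)) (Wneg k) w * q powi (int n - 2*int k))
           = (\<lambda>w. \<Sum>k\<le>n. qsh q (Wneg k) (Gt (n-k)) w * q powi (2*int k - int n))) \<and>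
      ((\<lambda>w. \<Sum>k\<le>n. qsh q (Gt (n-k)) (Wpos k) w * q powi (2*int k - int n))
           = (\<lambda>w. \<Sum>k\<le>n. qsh q (Wpos k) (Gt (n-k)) w * q powi (int n - 2*int k)))"
  using sum_qsh_G_Wneg[OF assms(1)] sum_qsh_G_Wpos[OF assms(1)]
    sum_qsh_Gt_Wneg[OF assms(1)] sum_qsh_Gt_Wpos[OF assms(1)]
  by (simp add: fun_eq_iff)

end
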